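(* Let $A=(\Sigma, Q, Q_0, \delta, F)$ be an $n$-state NFA that remembers the last symbol. For each symbol $a \in \Sigma$, let $Q_a=\bigcup_{q\in Q}\delta(q,a) \subseteq Q$ be the set of states reachable by a transition by $a$, and let $n_1 = \max_{a \in \Sigma} |Q_a|$. Then there exists a DFA with at most $\max(2^{\frac{n}{2}+1}, 2^{n_1+1})$ states that recognizes $L(A)$.
   Context: An NFA is a quintuple $(\Sigma,Q,Q_0,\delta,F)$ with finite alphabet $\Sigma$, finite state set $Q$, set of initial states $Q_0\subseteq Q$, transition function $\delta\colon Q\times\Sigma\to 2^Q$ and accepting states $F\subseteq Q$; $L(A)$ is the set of strings having an accepting computation. A DFA is an NFA with one initial state and exactly one transition from each state by each symbol. An NFA remembers the last symbol if its state set is a disjoint union of subsets $P_a$ ($a\in\Sigma$) with $\delta(q,a)\subseteq P_a$ for all $q\in Q$, $a\in\Sigma$. *)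

theory Defs
  imports Complex_Main
begin

definition is_nfa :: "'a set \<Rightarrow> 's set \<Rightarrow> 's set \<Rightarrow> ('s \<Rightarrow> 'a \<Rightarrow> 's set) \<Rightarrow> 's set \<Rightarrow> bool" where
  "is_nfa \<Sigma> Q Q0 \<delta> F \<longleftrightarrow> finite \<Sigma> \<and> finite Q \<and> Q0 \<subseteq> Q \<and> F \<subseteq> Q \<and>
     (\<forall>q\<in>Q. \<forall>a\<in>\<Sigma>. \<delta> q a \<subseteq> Q)"

definition nfa_lang :: "'a set \<Rightarrow> 's set \<Rightarrow> 's set \<Rightarrow> ('s \<Rightarrow> 'a \<Rightarrow> 's set) \<Rightarrow> 's set \<Rightarrow> 'a list set" where
  "nfa_lang \<Sigma> Q Q0 \<delta> F = {w \<in> lists \<Sigma>. \<exists>p :: nat \<Rightarrow> 's.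
     p 0 \<in> Q0 \<and> (\<forall>i < length w. p (Suc i) \<in> \<delta> (p i) (w ! i)) \<and> p (length w) \<in> F}"

definition is_dfa :: "'a set \<Rightarrow> 's set \<Rightarrow> 's \<Rightarrow> ('s \<Rightarrow> 'a \<Rightarrow> 's) \<Rightarrow> 's set \<Rightarrow> bool" where
  "is_dfa \<Sigma> Q q0 \<delta> F \<longleftrightarrow> finite \<Sigma> \<and> finite Q \<and> q0 \<in> Q \<and> F \<subseteq> Q \<and>
     (\<forall>q\<in>Q. \<forall>a\<in>\<Sigma>. \<delta> q a \<in> Q)"

definition dfa_lang :: "'a set \<Rightarrow> 's set \<Rightarrow> 's \<Rightarrow> ('s \<Rightarrow> 'a \<Rightarrow> 's) \<Rightarrow> 's set \<Rightarrow> 'a list set" where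
  "dfa_lang \<Sigma> Q q0 \<delta> F = {w \<in> lists \<Sigma>. fold (\<lambda>a q. \<delta> q a) w q0 \<in> F}"

definition remembers_last :: "'a set \<Rightarrow> 's set \<Rightarrow> ('s \<Rightarrow> 'a \<Rightarrow> 's set) \<Rightarrow> bool" where
  "remembers_last \<Sigma> Q \<delta> \<longleftrightarrow> (\<exists>P :: 'a \<Rightarrow> 's set.
     Q = (\<Union>a\<in>\<Sigma>. P a) \<and> (\<forall>a\<in>\<Sigma>. \<forall>b\<in>\<Sigma>. a \<noteq> b \<longrightarrow> P a \<inter> P b = {}) \<and>
     (\<forall>q\<in>Q. \<forall>a\<in>\<Sigma>. \<delta> q a \<subseteq> P a))"

end

theory Submission imports Defs "HOL-Analysis.Convex" begin

text \<open>
  The subset construction only needs the subsets of Q reachable from Q0. After a nonempty word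
  ending in a, the reachable set lies inside Q_a, so Q0 together with the power sets of
  the Q_a suffices; these power sets share the empty set, leaving at most
  2 + \<Sum>_a (2^k_a - 1) states with k_a = |Q_a|. Remembering the last symbol makes the
  Q_a disjoint, so \<Sum>_a k_a \<le> n. If every k_a \<le> n/2, convexity of 2^x bounds each term
  by the chord through 0 and n/2, giving 2^(n/2+1) in total; otherwise a single k_a exceeds
  the sum of all others, and superadditivity of 2^x - 1 gives 2^(k_a+1).
\<close>

lemma two_powr_minus_one_le_chord:
  fixes k h :: real
  assumes "0 \<le> k" "k \<le> h" "0 < h"
  shows "2 powr k - 1 \<le> k / h * (2 powr h - 1)"
proof -
  define t where "t = k / h"
  have t: "0 \<le> t" "t \<le> 1" using assms by (auto simp: t_def)
  have "exp ((1 - t) *\<^sub>R 0 + t *\<^sub>R (h * ln 2)) \<le> (1 - t) * exp 0 + t * exp (h * ln 2)"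
    using t by (intro convex_onD[OF exp_convex]) auto
  moreover have "t * (h * ln 2) = k * ln 2" using assms by (simp add: t_def)
  ultimately have "2 powr k \<le> 1 - t + t * 2 powr h"
    by (simp add: powr_def mult.commute)
  then show ?thesis by (simp add: t_def algebra_simps)
qed

lemma two_power_minus_one_add_le: "(2::nat) ^ x - 1 + (2 ^ y - 1) \<le> 2 ^ (x + y) - 1"
proof -
  obtain u v where "(2::nat) ^ x = Suc u" "(2::nat) ^ y = Suc v"
    using not0_implies_Suc[of "2 ^ x"] not0_implies_Suc[of "2 ^ y"] by auto
  then show ?thesis by (simp add: power_add)
qed

lemma sum_two_power_minus_one_le:
  fixes k :: "'a \<Rightarrow> nat"
  assumes "finite B"
  shows "(\<Sum>b\<in>B. 2 ^ k b - 1) \<le> (2::nat) ^ (\<Sum>b\<in>B. k b) - 1"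
  using assms
proof (induction B rule: finite_induct)
  case (insert x B)
  have "(\<Sum>b\<in>insert x B. 2 ^ k b - 1) = (2::nat) ^ k x - 1 + (\<Sum>b\<in>B. 2 ^ k b - 1)"
    using insert by simp
  also have "\<dots> \<le> 2 ^ k x - 1 + (2 ^ (\<Sum>b\<in>B. k b) - 1)"
    by (rule add_left_mono[OF insert.IH])
  also have "\<dots> \<le> 2 ^ (\<Sum>b\<in>insert x B. k b) - 1"
    using insert two_power_minus_one_add_le by simp
  finally show ?case .
qed simp

lemma two_plus_sum_two_power_minus_one_le_balanced:
  fixes k :: "'a \<Rightarrow> nat"
  assumes "finite S" "(\<Sum>a\<in>S. k a) \<le> n" "\<forall>a\<in>S. 2 * k a \<le> n"
  shows "real (2 + (\<Sum>a\<in>S. 2 ^ k a - 1)) \<le> 2 powr (real n / 2 + 1)"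
proof (cases "n = 0")
  case True
  then show ?thesis using assms by simp
next
  case False
  define h where "h = real n / 2"
  have h: "h > 0" using False by (simp add: h_def)
  have "real (\<Sum>a\<in>S. 2 ^ k a - 1) = (\<Sum>a\<in>S. 2 powr real (k a) - 1)"
    by (simp add: of_nat_diff powr_realpow)
  also have "\<dots> \<le> (\<Sum>a\<in>S. real (k a) / h * (2 powr h - 1))"
    using assms(3) h by (intro sum_mono two_powr_minus_one_le_chord) (auto simp: h_def)
  also have "\<dots> = real (\<Sum>a\<in>S. k a) / h * (2 powr h - 1)"
    by (simp add: sum_distrib_right sum_divide_distrib)
  also have "\<dots> \<le> real n / h * (2 powr h - 1)"
    using of_nat_mono[OF assms(2)] h by (intro mult_right_mono divide_right_mono) (auto simp: ge_one_powr_ge_zero)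
  also have "\<dots> = 2 powr (h + 1) - 2"
    using h by (simp add: h_def powr_add)
  finally show ?thesis by (simp add: h_def)
qed

lemma two_plus_sum_two_power_minus_one_le_dominant:
  fixes k :: "'a \<Rightarrow> nat"
  assumes "finite S" "(\<Sum>a\<in>S. k a) \<le> n" "a0 \<in> S" "n \<le> 2 * k a0"
  shows "2 + (\<Sum>a\<in>S. 2 ^ k a - 1) \<le> (2::nat) ^ (k a0 + 1)"
proof -
  have rest: "(\<Sum>a\<in>S - {a0}. k a) \<le> k a0"
    using sum.remove[OF assms(1,3), of k] assms(2,4) by simp
  have "(\<Sum>a\<in>S. 2 ^ k a - 1) = (2 ^ k a0 - 1) + (\<Sum>a\<in>S - {a0}. (2::nat) ^ k a - 1)"
    by (rule sum.remove[OF assms(1,3)])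
  also have "(\<Sum>a\<in>S - {a0}. (2::nat) ^ k a - 1) \<le> 2 ^ (\<Sum>a\<in>S - {a0}. k a) - 1"
    using assms(1) by (intro sum_two_power_minus_one_le) auto
  also have "\<dots> \<le> 2 ^ k a0 - 1"
    using rest by (intro diff_le_mono power_increasing) auto
  finally have "2 + (\<Sum>a\<in>S. 2 ^ k a - 1) \<le> 2 * (2::nat) ^ k a0"
    using one_le_power[of "2::nat" "k a0"] by linarith
  then show ?thesis by simp
qed

lemma two_plus_sum_two_power_minus_one_le_max:
  fixes k :: "'a \<Rightarrow> nat"
  assumes "finite S" "(\<Sum>a\<in>S. k a) \<le> n"
  shows "real (2 + (\<Sum>a\<in>S. 2 ^ k a - 1))
           \<le> max (2 powr (real n / 2 + 1)) (2 ^ (Max (insert 0 (k ` S)) + 1))"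
proof (cases "\<forall>a\<in>S. 2 * k a \<le> n")
  case True
  then show ?thesis
    using two_plus_sum_two_power_minus_one_le_balanced[OF assms] by simp
next
  case False
  then obtain a0 where a0: "a0 \<in> S" "n \<le> 2 * k a0" by auto
  have "2 + (\<Sum>a\<in>S. 2 ^ k a - 1) \<le> (2::nat) ^ (k a0 + 1)"
    by (rule two_plus_sum_two_power_minus_one_le_dominant[OF assms a0])
  also have "\<dots> \<le> 2 ^ (Max (insert 0 (k ` S)) + 1)"
    using a0 assms(1) by (intro power_increasing) auto
  finally show ?thesis
    by (metis max.coboundedI2 of_nat_le_iff of_nat_numeral of_nat_power)
qed

lemma card_insert_UN_Pow_le:
  assumes "finite I" "\<And>i. i \<in> I \<Longrightarrow> finite (A i)"
  shows "card (insert X (\<Union>i\<in>I. Pow (A i))) \<le> 2 + (\<Sum>i\<in>I. 2 ^ card (A i) - 1)"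
proof -
  let ?N = "\<Union>i\<in>I. Pow (A i) - {{}}"
  have fin: "finite ?N" using assms by auto
  have "card (insert X (\<Union>i\<in>I. Pow (A i))) \<le> card (insert X (insert {} ?N))"
    using fin by (intro card_mono) auto
  also have "\<dots> \<le> 2 + card ?N"
  proof -
    have "card (insert X (insert {} ?N)) \<le> Suc (card (insert {} ?N))"
      by (rule card_insert_le_m1) auto
    moreover have "card (insert {} ?N) \<le> Suc (card ?N)"
      by (rule card_insert_le_m1) auto
    ultimately show ?thesis by simp
  qed
  also have "card ?N \<le> (\<Sum>i\<in>I. card (Pow (A i) - {{}}))"
    by (rule card_UN_le[OF assms(1)])
  also have "\<dots> = (\<Sum>i\<in>I. 2 ^ card (A i) - 1)"
    using assms(2) by (intro sum.cong) (auto simp: card_Pow)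
  finally show ?thesis by simp
qed

definition nfa_step :: "('s \<Rightarrow> 'a \<Rightarrow> 's set) \<Rightarrow> 's set \<Rightarrow> 'a \<Rightarrow> 's set" where
  "nfa_step \<delta> X a = (\<Union>q\<in>X. \<delta> q a)"

lemma nfa_step_mono: "X \<subseteq> Y \<Longrightarrow> nfa_step \<delta> X a \<subseteq> nfa_step \<delta> Y a"
  unfolding nfa_step_def by blast

lemma ex_path_Cons_iff:
  "(\<exists>p. p 0 \<in> X \<and> (\<forall>i<length (a # w). p (Suc i) \<in> \<delta> (p i) ((a # w) ! i)) \<and> p (length (a # w)) = q)
   \<longleftrightarrow> (\<exists>p. p 0 \<in> nfa_step \<delta> X a \<and> (\<forall>i<length w. p (Suc i) \<in> \<delta> (p i) (w ! i)) \<and> p (length w) = q)"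
proof
  assume "\<exists>p. p 0 \<in> X \<and> (\<forall>i<length (a # w). p (Suc i) \<in> \<delta> (p i) ((a # w) ! i)) \<and> p (length (a # w)) = q"
  then obtain p where "p 0 \<in> X" "\<forall>i<length (a # w). p (Suc i) \<in> \<delta> (p i) ((a # w) ! i)"
    "p (length (a # w)) = q" by blast
  then show "\<exists>p. p 0 \<in> nfa_step \<delta> X a \<and> (\<forall>i<length w. p (Suc i) \<in> \<delta> (p i) (w ! i)) \<and> p (length w) = q"
    by (intro exI[of _ "p \<circ> Suc"]) (force simp: nfa_step_def)
next
  assume "\<exists>p. p 0 \<in> nfa_step \<delta> X a \<and> (\<forall>i<length w. p (Suc i) \<in> \<delta> (p i) (w ! i)) \<and> p (length w) = q"
  then obtain p x where "x \<in> X" "p 0 \<in> \<delta> x a" "\<forall>i<length w. p (Suc i) \<in> \<delta> (p i) (w ! i)"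
    "p (length w) = q" by (auto simp: nfa_step_def)
  then show "\<exists>p. p 0 \<in> X \<and> (\<forall>i<length (a # w). p (Suc i) \<in> \<delta> (p i) ((a # w) ! i)) \<and> p (length (a # w)) = q"
    by (intro exI[of _ "case_nat x p"]) (auto simp: less_Suc_eq_0_disj)
qed

lemma mem_fold_nfa_step_iff_path:
  "q \<in> fold (\<lambda>a X. nfa_step \<delta> X a) w X \<longleftrightarrow>
   (\<exists>p. p 0 \<in> X \<and> (\<forall>i<length w. p (Suc i) \<in> \<delta> (p i) (w ! i)) \<and> p (length w) = q)"
proof (induction w arbitrary: X)
  case (Cons a w)
  show ?case unfolding ex_path_Cons_iff Cons.IH[symmetric] by simp
qed auto

lemma fold_nfa_step_closed:
  assumes "w \<in> lists \<Sigma>" "X \<in> S" "\<And>X a. X \<in> S \<Longrightarrow> a \<in> \<Sigma> \<Longrightarrow> nfa_step \<delta> X a \<in> S"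
  shows "fold (\<lambda>a X. nfa_step \<delta> X a) w X \<in> S"
  using assms(1,2) by (induction w arbitrary: X) (auto intro: assms(3))

lemma subset_construction:
  fixes S :: "'s set set" and F :: "'s set"
  defines "F' \<equiv> {X \<in> S. X \<inter> F \<noteq> {}}"
  assumes "finite \<Sigma>" "finite S" and init: "Q0 \<in> S"
    and closed: "\<And>X a. X \<in> S \<Longrightarrow> a \<in> \<Sigma> \<Longrightarrow> nfa_step \<delta> X a \<in> S"
  shows "is_dfa \<Sigma> S Q0 (nfa_step \<delta>) F'"
    and "dfa_lang \<Sigma> S Q0 (nfa_step \<delta>) F' = nfa_lang \<Sigma> Q Q0 \<delta> F"
proof -
  show "is_dfa \<Sigma> S Q0 (nfa_step \<delta>) F'"
    using assms unfolding is_dfa_def by auto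
  have "fold (\<lambda>a X. nfa_step \<delta> X a) w Q0 \<in> F' \<longleftrightarrow>
    (\<exists>p. p 0 \<in> Q0 \<and> (\<forall>i<length w. p (Suc i) \<in> \<delta> (p i) (w ! i)) \<and> p (length w) \<in> F)"
    if "w \<in> lists \<Sigma>" for w
  proof -
    have "fold (\<lambda>a X. nfa_step \<delta> X a) w Q0 \<in> F' \<longleftrightarrow>
        (\<exists>q\<in>F. q \<in> fold (\<lambda>a X. nfa_step \<delta> X a) w Q0)"
      using fold_nfa_step_closed[OF that init closed] by (auto simp: F'_def)
    then show ?thesis unfolding mem_fold_nfa_step_iff_path by blast
  qed
  then show "dfa_lang \<Sigma> S Q0 (nfa_step \<delta>) F' = nfa_lang \<Sigma> Q Q0 \<delta> F"
    unfolding dfa_lang_def nfa_lang_def by blast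
qed

lemma dfa_renumber_nat:
  assumes "is_dfa \<Sigma> S q0 \<delta> F"
  shows "\<exists>(Q' :: nat set) q0' \<delta>' F'. is_dfa \<Sigma> Q' q0' \<delta>' F' \<and>
           dfa_lang \<Sigma> Q' q0' \<delta>' F' = dfa_lang \<Sigma> S q0 \<delta> F \<and> card Q' = card S"
proof -
  have fin: "finite S" and q0: "q0 \<in> S" and F: "F \<subseteq> S"
    and closed: "\<And>q a. q \<in> S \<Longrightarrow> a \<in> \<Sigma> \<Longrightarrow> \<delta> q a \<in> S"
    using assms unfolding is_dfa_def by auto
  obtain h where h: "bij_betw h S {0..<card S}"
    using ex_bij_betw_finite_nat[OF fin] by blast
  define g where "g = inv_into S h"
  have gh: "g (h q) = q" if "q \<in> S" for q
    using h that by (simp add: g_def bij_betw_inv_into_left)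
  have hS: "h q < card S" if "q \<in> S" for q
    using bij_betw_apply[OF h that] by simp
  have g: "g i \<in> S" if "i < card S" for i
    using h that unfolding g_def by (auto intro: bij_betw_apply[OF bij_betw_inv_into])
  define \<delta>' where "\<delta>' i a = h (\<delta> (g i) a)" for i a
  have run: "fold (\<lambda>a q. \<delta>' q a) w (h q) = h (fold (\<lambda>a q. \<delta> q a) w q)
      \<and> fold (\<lambda>a q. \<delta> q a) w q \<in> S"
    if "w \<in> lists \<Sigma>" "q \<in> S" for w q
    using that by (induction w arbitrary: q) (auto simp: \<delta>'_def gh closed)
  have accept: "fold (\<lambda>a q. \<delta>' q a) w (h q0) \<in> h ` F \<longleftrightarrow> fold (\<lambda>a q. \<delta> q a) w q0 \<in> F"
    if "w \<in> lists \<Sigma>" for w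
    using run[OF that q0] F bij_betw_imp_inj_on[OF h] by (simp add: inj_on_image_mem_iff)
  have "is_dfa \<Sigma> {0..<card S} (h q0) \<delta>' (h ` F)"
    using assms q0 F closed hS g unfolding is_dfa_def \<delta>'_def by auto
  moreover have "dfa_lang \<Sigma> {0..<card S} (h q0) \<delta>' (h ` F) = dfa_lang \<Sigma> S q0 \<delta> F"
    using accept unfolding dfa_lang_def by blast
  ultimately show ?thesis by fastforce
qed

lemma is_nfa_nfa_step_subset: "is_nfa \<Sigma> Q Q0 \<delta> F \<Longrightarrow> a \<in> \<Sigma> \<Longrightarrow> nfa_step \<delta> Q a \<subseteq> Q"
  unfolding is_nfa_def nfa_step_def by blast

lemma nfa_step_reachable_closed:
  assumes "is_nfa \<Sigma> Q Q0 \<delta> F" "X \<in> insert Q0 (\<Union>b\<in>\<Sigma>. Pow (nfa_step \<delta> Q b))" "a \<in> \<Sigma>"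
  shows "nfa_step \<delta> X a \<in> insert Q0 (\<Union>b\<in>\<Sigma>. Pow (nfa_step \<delta> Q b))"
proof -
  have "X \<subseteq> Q"
    using assms(2) is_nfa_nfa_step_subset[OF assms(1)] assms(1) unfolding is_nfa_def by blast
  then have "nfa_step \<delta> X a \<in> Pow (nfa_step \<delta> Q a)"
    by (simp add: nfa_step_mono)
  then show ?thesis using assms(3) by blast
qed

lemma remembers_last_sum_card_le:
  assumes "is_nfa \<Sigma> Q Q0 \<delta> F" "remembers_last \<Sigma> Q \<delta>"
  shows "(\<Sum>a\<in>\<Sigma>. card (nfa_step \<delta> Q a)) \<le> card Q"
proof -
  obtain P where disj: "\<forall>a\<in>\<Sigma>. \<forall>b\<in>\<Sigma>. a \<noteq> b \<longrightarrow> P a \<inter> P b = {}"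
    and into: "\<forall>q\<in>Q. \<forall>a\<in>\<Sigma>. \<delta> q a \<subseteq> P a"
    using assms(2) unfolding remembers_last_def by blast
  have fin: "finite \<Sigma>" "finite Q" using assms(1) unfolding is_nfa_def by auto
  note sub = is_nfa_nfa_step_subset[OF assms(1)]
  have "nfa_step \<delta> Q a \<subseteq> P a" if "a \<in> \<Sigma>" for a
    using into that unfolding nfa_step_def by blast
  then have "\<forall>a\<in>\<Sigma>. \<forall>b\<in>\<Sigma>. a \<noteq> b \<longrightarrow> nfa_step \<delta> Q a \<inter> nfa_step \<delta> Q b = {}"
    using disj by blast
  moreover have "\<forall>a\<in>\<Sigma>. finite (nfa_step \<delta> Q a)"
    using sub fin(2) rev_finite_subset by blast
  ultimately have "(\<Sum>a\<in>\<Sigma>. card (nfa_step \<delta> Q a)) = card (\<Union>a\<in>\<Sigma>. nfa_step \<delta> Q a)"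
    by (simp add: card_UN_disjoint fin(1))
  also have "\<dots> \<le> card Q"
    using sub fin by (intro card_mono) auto
  finally show ?thesis .
qed

theorem lemma2:
  fixes \<Sigma> :: "'a set" and Q Q0 F :: "'s set" and \<delta> :: "'s \<Rightarrow> 'a \<Rightarrow> 's set"
  assumes "is_nfa \<Sigma> Q Q0 \<delta> F"
    and "remembers_last \<Sigma> Q \<delta>"
  shows "\<exists>(Q' :: nat set) q0 \<delta>' F'. is_dfa \<Sigma> Q' q0 \<delta>' F' \<and>
           dfa_lang \<Sigma> Q' q0 \<delta>' F' = nfa_lang \<Sigma> Q Q0 \<delta> F \<and>
           real (card Q') \<le> max (2 powr (real (card Q) / 2 + 1))
             (2 ^ (Max (insert 0 ((\<lambda>a. card (\<Union>q\<in>Q. \<delta> q a)) ` \<Sigma>)) + 1))"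
proof -
  define S where "S = insert Q0 (\<Union>a\<in>\<Sigma>. Pow (nfa_step \<delta> Q a))"
  have fin: "finite \<Sigma>" "\<And>a. a \<in> \<Sigma> \<Longrightarrow> finite (nfa_step \<delta> Q a)"
    using assms(1) is_nfa_nfa_step_subset[OF assms(1)] unfolding is_nfa_def
    by (auto intro: rev_finite_subset)
  have S: "finite S" "Q0 \<in> S" unfolding S_def using fin by auto
  have closed: "\<And>X a. X \<in> S \<Longrightarrow> a \<in> \<Sigma> \<Longrightarrow> nfa_step \<delta> X a \<in> S"
    unfolding S_def by (rule nfa_step_reachable_closed[OF assms(1)])
  have subset_dfa: "is_dfa \<Sigma> S Q0 (nfa_step \<delta>) {X \<in> S. X \<inter> F \<noteq> {}}"
    and subset_lang: "dfa_lang \<Sigma> S Q0 (nfa_step \<delta>) {X \<in> S. X \<inter> F \<noteq> {}} = nfa_lang \<Sigma> Q Q0 \<delta> F"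
    using subset_construction[OF fin(1) S] closed by blast+
  obtain Q' :: "nat set" and q0 \<delta>' F' where dfa: "is_dfa \<Sigma> Q' q0 \<delta>' F'"
    and lang: "dfa_lang \<Sigma> Q' q0 \<delta>' F' = nfa_lang \<Sigma> Q Q0 \<delta> F" and card: "card Q' = card S"
    using dfa_renumber_nat[OF subset_dfa] unfolding subset_lang by blast
  have "card Q' \<le> 2 + (\<Sum>a\<in>\<Sigma>. 2 ^ card (nfa_step \<delta> Q a) - 1)"
    unfolding card S_def using fin by (rule card_insert_UN_Pow_le)
  then have "real (card Q') \<le> real (2 + (\<Sum>a\<in>\<Sigma>. 2 ^ card (nfa_step \<delta> Q a) - 1))"
    by (simp only: of_nat_le_iff)
  also have "\<dots> \<le> max (2 powr (real (card Q) / 2 + 1))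
      (2 ^ (Max (insert 0 ((\<lambda>a. card (nfa_step \<delta> Q a)) ` \<Sigma>)) + 1))"
    using two_plus_sum_two_power_minus_one_le_max[OF fin(1) remembers_last_sum_card_le[OF assms]] .
  finally show ?thesis
    using dfa lang unfolding nfa_step_def by blast
qed

end
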